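(* Let $\|f^{(\beta_* )}\|<\infty$ for some $\beta_*>1$, $\hat\beta_*=\beta_*\wedge1.5$, $\varepsilon\in(0,1)$ with $N_\varepsilon=\lfloor(\varepsilon^2\log\varepsilon^{-5})^{-1/(2\beta_*+1)}\rfloor\ge1$, and let $h\in[0,1]^{N_\varepsilon}$ (possibly random). Let $\hat X=\max_{1\le k\le N_\varepsilon}\sqrt{\xi_k(\vartheta)^2+\xi_k^*(\vartheta)^2}$. Then, almost surely, for all $\tau$ with $4\pi|\tau-\vartheta|\le N_\varepsilon^{-1}$, $$\Big|\Phi_\varepsilon''(\tau,h)+\sum_{k=1}^{N_\varepsilon}(2\pi k)^2h_kf_k^2\Big|\le N_\varepsilon^{2-2\hat\beta_*}\Big(\|f^{(\beta_* )}\|+\frac{2\pi\hat X}{\sqrt{\log\varepsilon^{-5}}}\Big)^2.$$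
   Context: Model: $\vartheta\in\mathbb R$, $f$ locally square integrable, even, $1$-periodic; $f_k=\sqrt2\int_{-1/2}^{1/2}\cos(2\pi kt)f(t)dt$, $\|f^{(\beta)}\|^2=\sum_{k\ge1}(2\pi k)^{2\beta}f_k^2$. Observations $x_k=f_k\cos(2\pi k\vartheta)+\varepsilon\xi_k$, $x_k^*=f_k\sin(2\pi k\vartheta)+\varepsilon\xi_k^*$, $\xi_k,\xi_k^*$ i.i.d. $\mathcal N(0,1)$. Define $\xi_k(\vartheta)=\xi_k\cos(2\pi k\vartheta)+\xi_k^*\sin(2\pi k\vartheta)$, $\xi^*_k(\vartheta)=\xi_k^*\cos(2\pi k\vartheta)-\xi_k\sin(2\pi k\vartheta)$ (so that $x_k\cos(2\pi k\vartheta)+x_k^*\sin(2\pi k\vartheta)=f_k+\varepsilon\xi_k(\vartheta)$ and $x_k^*\cos(2\pi k\vartheta)-x_k\sin(2\pi k\vartheta)=\varepsilon\xi_k^*(\vartheta)$). $h\in[0,1]^N$ extended by $0$; $\Phi_\varepsilon(\tau,h)=\frac12\sum_kh_k(x_k\cos(2\pi k\tau)+x_k^*\sin(2\pi k\tau))^2$, $\Phi''_\varepsilon$ its second derivative in $\tau$. *)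

theory Defs
  imports "HOL-Analysis.Analysis"
begin

definition fcoef :: "(real \<Rightarrow> real) \<Rightarrow> nat \<Rightarrow> real" where
  "fcoef f k = sqrt 2 * (LBINT t=-(1/2)..1/2. cos (2*pi*real k*t) * f t)"

text \<open>Squared Sobolev-type norm: sum over k >= 1 of (2 pi k)^(2 beta) f_k^2
  (the k = 0 term vanishes since 0 powr a = 0).\<close>
definition sob_sq :: "real \<Rightarrow> (real \<Rightarrow> real) \<Rightarrow> real" where
  "sob_sq \<beta> f = (\<Sum>k. (2*pi*real k) powr (2*\<beta>) * (fcoef f k)^2)"

definition sob_finite :: "real \<Rightarrow> (real \<Rightarrow> real) \<Rightarrow> bool" where
  "sob_finite \<beta> f \<longleftrightarrow> summable (\<lambda>k. (2*pi*real k) powr (2*\<beta>) * (fcoef f k)^2)"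

definition sob_norm :: "real \<Rightarrow> (real \<Rightarrow> real) \<Rightarrow> real" where
  "sob_norm \<beta> f = sqrt (sob_sq \<beta> f)"

definition obs :: "(real \<Rightarrow> real) \<Rightarrow> real \<Rightarrow> real \<Rightarrow> (nat \<Rightarrow> real) \<Rightarrow> nat \<Rightarrow> real" where
  "obs f \<theta> \<epsilon> \<xi> k = fcoef f k * cos (2*pi*real k*\<theta>) + \<epsilon> * \<xi> k"

definition obs_star :: "(real \<Rightarrow> real) \<Rightarrow> real \<Rightarrow> real \<Rightarrow> (nat \<Rightarrow> real) \<Rightarrow> nat \<Rightarrow> real" where
  "obs_star f \<theta> \<epsilon> \<xi>s k = fcoef f k * sin (2*pi*real k*\<theta>) + \<epsilon> * \<xi>s k"

definition xi_rot :: "(nat \<Rightarrow> real) \<Rightarrow> (nat \<Rightarrow> real) \<Rightarrow> real \<Rightarrow> nat \<Rightarrow> real" where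
  "xi_rot \<xi> \<xi>s \<theta> k = \<xi> k * cos (2*pi*real k*\<theta>) + \<xi>s k * sin (2*pi*real k*\<theta>)"

definition xi_rot_star :: "(nat \<Rightarrow> real) \<Rightarrow> (nat \<Rightarrow> real) \<Rightarrow> real \<Rightarrow> nat \<Rightarrow> real" where
  "xi_rot_star \<xi> \<xi>s \<theta> k = \<xi>s k * cos (2*pi*real k*\<theta>) - \<xi> k * sin (2*pi*real k*\<theta>)"

definition Phi :: "(real \<Rightarrow> real) \<Rightarrow> real \<Rightarrow> real \<Rightarrow> (nat \<Rightarrow> real) \<Rightarrow> (nat \<Rightarrow> real)
                  \<Rightarrow> nat \<Rightarrow> (nat \<Rightarrow> real) \<Rightarrow> real \<Rightarrow> real" where
  "Phi f \<theta> \<epsilon> \<xi> \<xi>s N h \<tau> = (1/2) * (\<Sum>k\<in>{1..N}. h k *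
      (obs f \<theta> \<epsilon> \<xi> k * cos (2*pi*real k*\<tau>) + obs_star f \<theta> \<epsilon> \<xi>s k * sin (2*pi*real k*\<tau>))^2)"

definition N_eps :: "real \<Rightarrow> real \<Rightarrow> nat" where
  "N_eps \<beta> \<epsilon> = nat \<lfloor>(\<epsilon>^2 * ln (1 / \<epsilon>^5)) powr (-1 / (2*\<beta> + 1))\<rfloor>"

end

theory Submission
  imports Defs
begin

(* Put d = tau - theta. The pair (x_k cos 2 pi k tau + x_k^* sin 2 pi k tau, x_k^* cos 2 pi k tau - x_k sin 2 pi k tau)
   is the vector (f_k + eps xi_k(theta), eps xi_k^*(theta)) rotated by the angle 2 pi k d, so
   Phi''(tau) + sum_k (2 pi k)^2 h_k f_k^2 = sum_k h_k (2 pi k)^2 E_k with a defect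
   |E_k| <= 2 f_k^2 sin^2 (2 pi k d) + 2 eps |f_k| X + eps^2 X^2, where X bounds the rotated noise.
   After weighting by (2 pi k)^2, the first term is a bias bounded through the Sobolev norm since
   |2 pi k d| <= k / (2N), the second is bounded by Cauchy-Schwarz against the Sobolev norm, and the
   third is at most eps^2 (2 pi N)^2 N X^2. The choice of N_eps gives eps^2 log eps^-5 <= N^-(2 beta + 1),
   which turns the three contributions into the three terms of the expanded square. *)

lemma has_real_derivative_trig_square:
  fixes A B \<omega> :: real
  shows "((\<lambda>t. (A * cos (\<omega> * t) + B * sin (\<omega> * t))^2 / 2) has_real_derivative
      \<omega> * (A * cos (\<omega> * t) + B * sin (\<omega> * t)) * (B * cos (\<omega> * t) - A * sin (\<omega> * t))) (at t)"
  by (rule derivative_eq_intros refl | simp)+ (simp add: algebra_simps)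

lemma has_real_derivative_trig_product:
  fixes A B \<omega> :: real
  shows "((\<lambda>t. \<omega> * (A * cos (\<omega> * t) + B * sin (\<omega> * t)) * (B * cos (\<omega> * t) - A * sin (\<omega> * t)))
      has_real_derivative
      \<omega>^2 * ((B * cos (\<omega> * t) - A * sin (\<omega> * t))^2 - (A * cos (\<omega> * t) + B * sin (\<omega> * t))^2)) (at t)"
  by (rule derivative_eq_intros refl | simp)+ (simp add: algebra_simps power2_eq_square)

lemma deriv2_trig_quadratic_sum:
  fixes A B c \<omega> :: "'a \<Rightarrow> real"
  shows "deriv (deriv (\<lambda>t. (1/2) * (\<Sum>k\<in>I. c k * (A k * cos (\<omega> k * t) + B k * sin (\<omega> k * t))^2))) \<tau>
    = (\<Sum>k\<in>I. c k * (\<omega> k)^2 * ((B k * cos (\<omega> k * \<tau>) - A k * sin (\<omega> k * \<tau>))^2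
        - (A k * cos (\<omega> k * \<tau>) + B k * sin (\<omega> k * \<tau>))^2))"
proof -
  have "(\<lambda>t. (1/2) * (\<Sum>k\<in>I. c k * (A k * cos (\<omega> k * t) + B k * sin (\<omega> k * t))^2))
      = (\<lambda>t. \<Sum>k\<in>I. c k * ((A k * cos (\<omega> k * t) + B k * sin (\<omega> k * t))^2 / 2))"
    by (simp add: sum_distrib_left)
  moreover have "deriv (\<lambda>t. \<Sum>k\<in>I. c k * ((A k * cos (\<omega> k * t) + B k * sin (\<omega> k * t))^2 / 2))
      = (\<lambda>t. \<Sum>k\<in>I. c k * (\<omega> k * (A k * cos (\<omega> k * t) + B k * sin (\<omega> k * t))
          * (B k * cos (\<omega> k * t) - A k * sin (\<omega> k * t))))"
    by (intro ext DERIV_imp_deriv DERIV_sum DERIV_cmult has_real_derivative_trig_square)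
  moreover have "deriv (\<lambda>t. \<Sum>k\<in>I. c k * (\<omega> k * (A k * cos (\<omega> k * t) + B k * sin (\<omega> k * t))
          * (B k * cos (\<omega> k * t) - A k * sin (\<omega> k * t)))) \<tau>
      = (\<Sum>k\<in>I. c k * ((\<omega> k)^2 * ((B k * cos (\<omega> k * \<tau>) - A k * sin (\<omega> k * \<tau>))^2
          - (A k * cos (\<omega> k * \<tau>) + B k * sin (\<omega> k * \<tau>))^2)))"
    by (intro DERIV_imp_deriv DERIV_sum DERIV_cmult has_real_derivative_trig_product)
  ultimately show ?thesis by (simp add: mult.assoc)
qed

lemma obs_rotated:
  fixes d :: real
  shows "obs f \<theta> \<epsilon> \<xi> k * cos (2*pi*real k*(\<theta> + d)) + obs_star f \<theta> \<epsilon> \<xi>s k * sin (2*pi*real k*(\<theta> + d))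
      = (fcoef f k + \<epsilon> * xi_rot \<xi> \<xi>s \<theta> k) * cos (2*pi*real k*d) + \<epsilon> * xi_rot_star \<xi> \<xi>s \<theta> k * sin (2*pi*real k*d)"
    and "obs_star f \<theta> \<epsilon> \<xi>s k * cos (2*pi*real k*(\<theta> + d)) - obs f \<theta> \<epsilon> \<xi> k * sin (2*pi*real k*(\<theta> + d))
      = \<epsilon> * xi_rot_star \<xi> \<xi>s \<theta> k * cos (2*pi*real k*d) - (fcoef f k + \<epsilon> * xi_rot \<xi> \<xi>s \<theta> k) * sin (2*pi*real k*d)"
  unfolding obs_def obs_star_def xi_rot_def xi_rot_star_def distrib_left cos_add sin_add
  using sin_cos_squared_add[of "2*pi*real k*\<theta>"] by algebra+

lemma deriv2_Phi_rotated:
  "deriv (deriv (Phi f \<theta> \<epsilon> \<xi> \<xi>s N h)) (\<theta> + d)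
    = (\<Sum>k\<in>{1..N}. h k * (2*pi*real k)^2 *
        ((\<epsilon> * xi_rot_star \<xi> \<xi>s \<theta> k * cos (2*pi*real k*d) - (fcoef f k + \<epsilon> * xi_rot \<xi> \<xi>s \<theta> k) * sin (2*pi*real k*d))^2
       - ((fcoef f k + \<epsilon> * xi_rot \<xi> \<xi>s \<theta> k) * cos (2*pi*real k*d) + \<epsilon> * xi_rot_star \<xi> \<xi>s \<theta> k * sin (2*pi*real k*d))^2))"
proof -
  have "Phi f \<theta> \<epsilon> \<xi> \<xi>s N h = (\<lambda>t. (1/2) * (\<Sum>k\<in>{1..N}. h k *
      (obs f \<theta> \<epsilon> \<xi> k * cos (2*pi*real k*t) + obs_star f \<theta> \<epsilon> \<xi>s k * sin (2*pi*real k*t))^2))"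
    by (simp add: Phi_def fun_eq_iff)
  then show ?thesis
    by (simp only: deriv2_trig_quadratic_sum obs_rotated)
qed

lemma rotated_square_difference_bound:
  fixes f e x y c s :: real
  assumes unit: "c^2 + s^2 = 1" and e: "0 \<le> e"
  shows "\<bar>f^2 + (e * y * c - (f + e * x) * s)^2 - ((f + e * x) * c + e * y * s)^2\<bar>
     \<le> 2 * f^2 * s^2 + 2 * e * \<bar>f\<bar> * sqrt (x^2 + y^2) + e^2 * (x^2 + y^2)"
proof -
  define p where "p = x * c + y * s"
  define q where "q = y * c - x * s"
  have pq: "p^2 + q^2 = x^2 + y^2"
    using unit unfolding p_def q_def by algebra
  have expand: "f^2 + (e * y * c - (f + e * x) * s)^2 - ((f + e * x) * c + e * y * s)^2
      = 2 * f^2 * s^2 - 2 * e * f * (c * p + s * q) + e^2 * (q^2 - p^2)"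
    using unit unfolding p_def q_def by algebra
  have "(c * p + s * q)^2 + (c * q - s * p)^2 = p^2 + q^2"
    using unit by algebra
  then have "(c * p + s * q)^2 \<le> x^2 + y^2"
    using pq zero_le_power2[of "c * q - s * p"] by linarith
  then have cross: "\<bar>c * p + s * q\<bar> \<le> sqrt (x^2 + y^2)"
    by (simp add: real_le_rsqrt)
  have "\<bar>q^2 - p^2\<bar> \<le> x^2 + y^2"
    unfolding abs_le_iff using pq zero_le_power2[of p] zero_le_power2[of q] by linarith
  then have "\<bar>2 * e * f * (c * p + s * q) - e^2 * (q^2 - p^2)\<bar>
      \<le> 2 * e * \<bar>f\<bar> * sqrt (x^2 + y^2) + e^2 * (x^2 + y^2)"
    using cross e by (intro abs_triangle_ineq4[THEN order_trans] add_mono)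
      (auto simp: abs_mult intro!: mult_left_mono)
  moreover have "0 \<le> 2 * f^2 * s^2"
    by simp
  ultimately show ?thesis
    unfolding expand by linarith
qed

lemma le_nat_floor_powr_powr:
  fixes y a :: real
  assumes y: "0 < y" and a: "0 < a" and n: "1 \<le> nat \<lfloor>y powr (-1/a)\<rfloor>"
  shows "y \<le> real (nat \<lfloor>y powr (-1/a)\<rfloor>) powr (-a)"
proof -
  have "real (nat \<lfloor>y powr (-1/a)\<rfloor>) \<le> y powr (-1/a)"
    by (simp add: of_nat_floor)
  moreover have "0 < real (nat \<lfloor>y powr (-1/a)\<rfloor>)"
    using n by linarith
  ultimately have "(y powr (-1/a)) powr (-a) \<le> real (nat \<lfloor>y powr (-1/a)\<rfloor>) powr (-a)"
    using a by (intro powr_mono2') auto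
  also have "(y powr (-1/a)) powr (-a) = y"
    using a y by (simp add: powr_powr)
  finally show ?thesis .
qed

lemma N_eps_noise_level:
  assumes \<epsilon>: "0 < \<epsilon>" "\<epsilon> < 1" and \<beta>: "0 < 2*\<beta> + 1" and N: "1 \<le> N_eps \<beta> \<epsilon>"
  shows "\<epsilon>^2 * ln (1 / \<epsilon>^5) \<le> real (N_eps \<beta> \<epsilon>) powr (-(2*\<beta> + 1))"
proof -
  have "1 < 1 / \<epsilon>^5"
    using \<epsilon> by (simp add: power_less_one_iff)
  then have "0 < \<epsilon>^2 * ln (1 / \<epsilon>^5)"
    using \<epsilon> by simp
  then show ?thesis
    using le_nat_floor_powr_powr[OF _ \<beta>] N unfolding N_eps_def by simp
qed

lemma square_ratio_le_powr:
  fixes k n w b \<beta> :: real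
  assumes k: "0 < k" "k \<le> n" "k \<le> w" and w: "1 \<le> w" and b: "1 \<le> b" "b \<le> 2" "b \<le> \<beta>"
  shows "(k / n)^2 * w^2 \<le> n powr (2 - 2*b) * w powr (2*\<beta>)"
proof -
  have "(k / n)^2 = (k / n) powr 2"
    using k by (simp add: powr_realpow)
  also have "\<dots> \<le> (k / n) powr (2*b - 2)"
    using k b by (intro powr_mono') auto
  also have "\<dots> \<le> (w / n) powr (2*b - 2)"
    using k b by (intro powr_mono2 divide_right_mono) auto
  also have "\<dots> = n powr (2 - 2*b) * w powr (2*b - 2)"
    using k powr_minus_divide[of n "2*b - 2"] by (simp add: powr_divide)
  finally have "(k / n)^2 * w^2 \<le> n powr (2 - 2*b) * (w powr (2*b - 2) * w powr 2)"
    using w by (simp add: mult_right_mono powr_realpow mult.assoc)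
  also have "w powr (2*b - 2) * w powr 2 = w powr (2*b)"
    by (simp add: powr_add[symmetric])
  also have "n powr (2 - 2*b) * \<dots> \<le> n powr (2 - 2*b) * w powr (2*\<beta>)"
    using w b by (intro mult_left_mono powr_mono) auto
  finally show ?thesis .
qed

lemma sum_sin_square_le_sobolev:
  fixes F :: "nat \<Rightarrow> real"
  assumes near: "4*pi*\<bar>d\<bar> \<le> 1 / real N" and b: "1 \<le> b" "b \<le> 2" "b \<le> \<beta>"
  shows "(\<Sum>k\<in>{1..N}. (2*pi*real k)^2 * (2 * (F k)^2 * (sin (2*pi*real k*d))^2))
    \<le> real N powr (2 - 2*b) * (\<Sum>k\<in>{1..N}. (2*pi*real k) powr (2*\<beta>) * (F k)^2)"
  unfolding sum_distrib_left
proof (rule sum_mono)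
  fix k assume k: "k \<in> {1..N}"
  have "real k \<le> 2*pi*real k"
    using mult_right_mono[of 1 "2*pi" "real k"] pi_ge_two by simp
  moreover have "1 \<le> real k"
    using k by simp
  ultimately have freq: "real k \<le> 2*pi*real k" "1 \<le> 2*pi*real k"
    by linarith+
  have "\<bar>sin (2*pi*real k*d)\<bar> \<le> real k / 2 * (4*pi*\<bar>d\<bar>)"
    using abs_sin_x_le_abs_x[of "2*pi*real k*d"] by (simp add: abs_mult mult_ac)
  also have "\<dots> \<le> real k / 2 * (1 / real N)"
    using near by (intro mult_left_mono) auto
  finally have "\<bar>sin (2*pi*real k*d)\<bar>^2 \<le> (real k / real N / 2)^2"
    by (intro power_mono) auto
  then have sin: "2 * (sin (2*pi*real k*d))^2 \<le> (real k / real N)^2"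
    by (simp add: power_divide, use zero_le_power2[of "sin (2*pi*real k*d)"] in linarith)
  have "(2*pi*real k)^2 * (2 * (F k)^2 * (sin (2*pi*real k*d))^2)
      = 2 * (sin (2*pi*real k*d))^2 * ((2*pi*real k)^2 * (F k)^2)"
    by (simp only: mult_ac)
  also have "\<dots> \<le> ((real k / real N)^2 * (2*pi*real k)^2) * (F k)^2"
    using sin by (subst mult.assoc) (rule mult_right_mono, auto)
  also have "\<dots> \<le> (real N powr (2 - 2*b) * (2*pi*real k) powr (2*\<beta>)) * (F k)^2"
    using k b freq by (intro mult_right_mono square_ratio_le_powr) auto
  finally show "(2*pi*real k)^2 * (2 * (F k)^2 * (sin (2*pi*real k*d))^2)
      \<le> real N powr (2 - 2*b) * ((2*pi*real k) powr (2*\<beta>) * (F k)^2)"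
    by (simp only: mult.assoc)
qed

lemma two_pi_freq_powr_le:
  fixes \<beta> b :: real
  assumes k: "1 \<le> k" "k \<le> N" and \<beta>: "1 \<le> \<beta>" and b: "b \<le> \<beta>" "b \<le> 3/2"
  shows "(2*pi*real k) powr (4 - 2*\<beta>) \<le> 4*pi^2 * real N powr (4 - 4*b + 2*\<beta>)"
proof -
  have "(2*pi) powr (4 - 2*\<beta>) \<le> (2*pi) powr 2"
    using \<beta> pi_ge_two by (intro powr_mono) auto
  also have "\<dots> = 4*pi^2"
    by (simp add: power_mult_distrib)
  finally have const: "(2*pi) powr (4 - 2*\<beta>) \<le> 4*pi^2" .
  have "real k powr (4 - 2*\<beta>) \<le> real N powr (4 - 4*b + 2*\<beta>)"
  proof (cases "0 \<le> 4 - 2*\<beta>")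
    case True
    then have "real k powr (4 - 2*\<beta>) \<le> real N powr (4 - 2*\<beta>)"
      using k by (intro powr_mono2) auto
    also have "\<dots> \<le> real N powr (4 - 4*b + 2*\<beta>)"
      using k b by (intro powr_mono) auto
    finally show ?thesis .
  next
    case False
    then have "real k powr (4 - 2*\<beta>) \<le> real k powr 0"
      using k by (intro powr_mono) auto
    also have "\<dots> = 1"
      using k by simp
    also have "1 \<le> real N powr (4 - 4*b + 2*\<beta>)"
      using k b \<beta> by (intro ge_one_powr_ge_zero) auto
    finally show ?thesis .
  qed
  with const show ?thesis
    by (simp add: powr_mult mult_mono)
qed

lemma sum_square_abs_le_powr_Cauchy_Schwarz:
  fixes w F :: "'a \<Rightarrow> real"
  assumes w: "\<And>k. k \<in> I \<Longrightarrow> 0 < w k"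
  shows "(\<Sum>k\<in>I. (w k)^2 * \<bar>F k\<bar>)^2 \<le> (\<Sum>k\<in>I. w k powr (2*\<beta>) * (F k)^2) * (\<Sum>k\<in>I. w k powr (4 - 2*\<beta>))"
proof -
  have square_powr: "(x powr a)^2 = x powr (2*a)" for x a :: real
    by (cases "x = 0") (simp_all add: powr_power)
  have "(\<Sum>k\<in>I. (w k)^2 * \<bar>F k\<bar>) = (\<Sum>k\<in>I. (w k powr \<beta> * \<bar>F k\<bar>) * w k powr (2 - \<beta>))"
    using w by (intro sum.cong) (simp_all add: powr_add[symmetric] flip: powr_realpow)
  then have "(\<Sum>k\<in>I. (w k)^2 * \<bar>F k\<bar>)^2
      \<le> (\<Sum>k\<in>I. (w k powr \<beta> * \<bar>F k\<bar>)^2) * (\<Sum>k\<in>I. (w k powr (2 - \<beta>))^2)"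
    by (simp only: Cauchy_Schwarz_ineq_sum)
  also have "\<dots> = (\<Sum>k\<in>I. w k powr (2*\<beta>) * (F k)^2) * (\<Sum>k\<in>I. w k powr (4 - 2*\<beta>))"
    by (simp add: square_powr power_mult_distrib mult_ac)
  finally show ?thesis .
qed

lemma eps_sum_freq_square_abs_le:
  fixes F :: "nat \<Rightarrow> real"
  assumes N: "1 \<le> N" and level: "\<epsilon>^2 * L \<le> real N powr (-(2*\<beta> + 1))" and L: "0 < L"
    and \<beta>: "1 \<le> \<beta>" and b: "b \<le> \<beta>" "b \<le> 3/2"
  shows "\<epsilon> * (\<Sum>k\<in>{1..N}. (2*pi*real k)^2 * \<bar>F k\<bar>)
    \<le> 2*pi * real N powr (2 - 2*b) * sqrt (\<Sum>k\<in>{1..N}. (2*pi*real k) powr (2*\<beta>) * (F k)^2) / sqrt L"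
proof -
  define W where "W k = 2*pi*real k" for k
  define Q where "Q = (\<Sum>k\<in>{1..N}. W k powr (4 - 2*\<beta>))"
  define S2 where "S2 = (\<Sum>k\<in>{1..N}. W k powr (2*\<beta>) * (F k)^2)"
  have CS: "(\<Sum>k\<in>{1..N}. W k ^ 2 * \<bar>F k\<bar>)^2 \<le> S2 * Q"
    unfolding S2_def Q_def W_def by (rule sum_square_abs_le_powr_Cauchy_Schwarz) simp
  have "Q \<le> (\<Sum>k\<in>{1..N}. 4*pi^2 * real N powr (4 - 4*b + 2*\<beta>))"
    unfolding Q_def W_def using \<beta> b by (intro sum_mono two_pi_freq_powr_le) auto
  then have "\<epsilon>^2 * L * Q \<le> real N powr (-(2*\<beta> + 1)) * (real N * (4*pi^2 * real N powr (4 - 4*b + 2*\<beta>)))"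
    using level L by (intro mult_mono) (auto simp: Q_def intro: sum_nonneg)
  also have "\<dots> = 4*pi^2 * (real N powr (2 - 2*b))^2"
    using N by (simp add: powr_add[symmetric] powr_mult_base power2_eq_square algebra_simps)
  finally have level_Q: "\<epsilon>^2 * L * Q \<le> 4*pi^2 * (real N powr (2 - 2*b))^2" .
  have S2: "0 \<le> S2"
    unfolding S2_def by (intro sum_nonneg) auto
  have "(\<epsilon> * (\<Sum>k\<in>{1..N}. W k ^ 2 * \<bar>F k\<bar>))^2 \<le> \<epsilon>^2 * (S2 * Q)"
    using CS by (simp add: power_mult_distrib mult_left_mono)
  also have "\<dots> = S2 * (\<epsilon>^2 * L * Q) / L"
    using L by simp
  also have "\<dots> \<le> S2 * (4*pi^2 * (real N powr (2 - 2*b))^2) / L"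
    using level_Q S2 L by (intro divide_right_mono mult_left_mono) auto
  also have "\<dots> = (2*pi * real N powr (2 - 2*b) * sqrt S2 / sqrt L)^2"
    using S2 L by (simp add: power_divide power_mult_distrib)
  finally have "\<epsilon> * (\<Sum>k\<in>{1..N}. W k ^ 2 * \<bar>F k\<bar>) \<le> 2*pi * real N powr (2 - 2*b) * sqrt S2 / sqrt L"
    by (rule power2_le_imp_le) (use S2 L in simp)
  then show ?thesis
    unfolding W_def S2_def .
qed

lemma eps_square_sum_freq_square_le:
  assumes N: "1 \<le> N" and level: "\<epsilon>^2 * L \<le> real N powr (-(2*\<beta> + 1))" and L: "0 < L"
    and b: "b \<le> \<beta>"
  shows "\<epsilon>^2 * (\<Sum>k\<in>{1..N}. (2*pi*real k)^2) \<le> 4*pi^2 * real N powr (2 - 2*b) / L"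
proof -
  have "(\<Sum>k\<in>{1..N}. (2*pi*real k)^2) \<le> (\<Sum>k\<in>{1..N}. (2*pi*real N)^2)"
    by (intro sum_mono power_mono) auto
  also have "\<dots> = 4*pi^2 * real N powr 3"
    using N by (simp add: power_mult_distrib powr_numeral power3_eq_cube power2_eq_square)
  finally have "\<epsilon>^2 * L * (\<Sum>k\<in>{1..N}. (2*pi*real k)^2)
      \<le> real N powr (-(2*\<beta> + 1)) * (4*pi^2 * real N powr 3)"
    using level by (intro mult_mono sum_nonneg) auto
  also have "\<dots> = 4*pi^2 * real N powr (-(2*\<beta> + 1) + 3)"
    by (simp only: powr_add mult_ac)
  also have "\<dots> \<le> 4*pi^2 * real N powr (2 - 2*b)"
    using N b by (intro mult_left_mono powr_mono) auto
  finally show ?thesis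
    using L by (simp add: field_simps)
qed

lemma sum_mult_le_bound:
  fixes a X :: "'a \<Rightarrow> real"
  assumes "\<And>k. k \<in> I \<Longrightarrow> 0 \<le> a k" and "\<And>k. k \<in> I \<Longrightarrow> X k \<le> M"
  shows "(\<Sum>k\<in>I. a k * X k) \<le> M * (\<Sum>k\<in>I. a k)"
  unfolding sum_distrib_left using assms by (intro sum_mono) (metis mult.commute mult_left_mono)

lemma curvature_error_sum_le:
  fixes F X :: "nat \<Rightarrow> real"
  assumes N: "1 \<le> N" and near: "4*pi*\<bar>d\<bar> \<le> 1 / real N"
    and level: "\<epsilon>^2 * L \<le> real N powr (-(2*\<beta> + 1))" and L: "0 < L" and \<epsilon>: "0 \<le> \<epsilon>"
    and b: "1 \<le> b" "b \<le> 3/2" "b \<le> \<beta>"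
    and S: "(\<Sum>k\<in>{1..N}. (2*pi*real k) powr (2*\<beta>) * (F k)^2) \<le> S^2" "0 \<le> S"
    and X: "\<And>k. k \<in> {1..N} \<Longrightarrow> 0 \<le> X k \<and> X k \<le> M"
  shows "(\<Sum>k\<in>{1..N}. (2*pi*real k)^2 *
      (2 * (F k)^2 * (sin (2*pi*real k*d))^2 + 2 * \<epsilon> * \<bar>F k\<bar> * X k + \<epsilon>^2 * (X k)^2))
    \<le> real N powr (2 - 2*b) * (S + 2*pi*M / sqrt L)^2"
proof -
  define P where "P = real N powr (2 - 2*b)"
  have M: "0 \<le> M"
    using X[of 1] N by auto
  have P: "0 \<le> P"
    unfolding P_def by simp
  have "(\<Sum>k\<in>{1..N}. (2*pi*real k)^2 * (2 * (F k)^2 * (sin (2*pi*real k*d))^2)) \<le> P * S^2"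
    using sum_sin_square_le_sobolev[OF near, of b \<beta> F] mult_left_mono[OF S(1) P] b
    unfolding P_def by linarith
  moreover have "(\<Sum>k\<in>{1..N}. (2*pi*real k)^2 * (2 * \<epsilon> * \<bar>F k\<bar> * X k)) \<le> 2 * M * (2*pi * P * S / sqrt L)"
  proof -
    have "2*pi * P * sqrt (\<Sum>k\<in>{1..N}. (2*pi*real k) powr (2*\<beta>) * (F k)^2) / sqrt L \<le> 2*pi * P * S / sqrt L"
      using S P L real_le_lsqrt by (intro divide_right_mono mult_left_mono) auto
    with eps_sum_freq_square_abs_le[OF N level L, of b F] b
    have "\<epsilon> * (\<Sum>k\<in>{1..N}. (2*pi*real k)^2 * \<bar>F k\<bar>) \<le> 2*pi * P * S / sqrt L"
      unfolding P_def by linarith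
    moreover have "(\<Sum>k\<in>{1..N}. (2*pi*real k)^2 * (2 * \<epsilon> * \<bar>F k\<bar> * X k))
        \<le> 2 * M * (\<epsilon> * (\<Sum>k\<in>{1..N}. (2*pi*real k)^2 * \<bar>F k\<bar>))"
      using sum_mult_le_bound[of "{1..N}" "\<lambda>k. 2 * \<epsilon> * (2*pi*real k)^2 * \<bar>F k\<bar>" X M] X \<epsilon>
      by (simp add: sum_distrib_left mult_ac)
    ultimately show ?thesis
      using M by (meson mult_left_mono order_trans zero_le_mult_iff zero_le_numeral)
  qed
  moreover have "(\<Sum>k\<in>{1..N}. (2*pi*real k)^2 * (\<epsilon>^2 * (X k)^2)) \<le> M^2 * (4*pi^2 * P / L)"
  proof -
    have "(\<Sum>k\<in>{1..N}. (2*pi*real k)^2 * (\<epsilon>^2 * (X k)^2)) \<le> M^2 * (\<epsilon>^2 * (\<Sum>k\<in>{1..N}. (2*pi*real k)^2))"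
      using sum_mult_le_bound[of "{1..N}" "\<lambda>k. \<epsilon>^2 * (2*pi*real k)^2" "\<lambda>k. (X k)^2" "M^2"] X
      by (simp add: sum_distrib_left mult_ac power_mono)
    also have "\<dots> \<le> M^2 * (4*pi^2 * P / L)"
      using eps_square_sum_freq_square_le[OF N level L, of b] b unfolding P_def by (intro mult_left_mono) auto
    finally show ?thesis .
  qed
  moreover have "P * S^2 + 2 * M * (2*pi * P * S / sqrt L) + M^2 * (4*pi^2 * P / L) = P * (S + 2*pi*M / sqrt L)^2"
    using L by (simp add: power2_sum power_divide power_mult_distrib algebra_simps)
  ultimately show ?thesis
    unfolding sum.distrib distrib_left P_def[symmetric] by linarith
qed

lemma sob_norm_nonneg: "sob_finite \<beta> f \<Longrightarrow> 0 \<le> sob_norm \<beta> f"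
  unfolding sob_finite_def sob_norm_def sob_sq_def by (simp add: suminf_nonneg)

lemma sum_le_sob_norm_square:
  assumes "sob_finite \<beta> f"
  shows "(\<Sum>k\<in>{1..N}. (2*pi*real k) powr (2*\<beta>) * (fcoef f k)^2) \<le> (sob_norm \<beta> f)^2"
  using assms unfolding sob_finite_def sob_norm_def sob_sq_def
  by (simp add: suminf_nonneg sum_le_suminf)

lemma abs_deriv2_Phi_deviation_le_sum:
  fixes \<theta> :: real and \<xi> \<xi>s :: "nat \<Rightarrow> real"
  assumes \<epsilon>: "0 \<le> \<epsilon>" and h01: "\<And>k. k \<in> {1..N} \<Longrightarrow> 0 \<le> h k \<and> h k \<le> 1"
  defines "X k \<equiv> sqrt ((xi_rot \<xi> \<xi>s \<theta> k)^2 + (xi_rot_star \<xi> \<xi>s \<theta> k)^2)"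
  shows "\<bar>deriv (deriv (Phi f \<theta> \<epsilon> \<xi> \<xi>s N h)) (\<theta> + d) + (\<Sum>k\<in>{1..N}. (2*pi*real k)^2 * h k * (fcoef f k)^2)\<bar>
    \<le> (\<Sum>k\<in>{1..N}. (2*pi*real k)^2 * (2 * (fcoef f k)^2 * (sin (2*pi*real k*d))^2
        + 2 * \<epsilon> * \<bar>fcoef f k\<bar> * X k + \<epsilon>^2 * (X k)^2))"
proof -
  define x where "x = xi_rot \<xi> \<xi>s \<theta>"
  define y where "y = xi_rot_star \<xi> \<xi>s \<theta>"
  have regroup: "a * w * (p - q) + w * a * g = a * w * (g + p - q)" for a w p q g :: real
    by (simp add: algebra_simps)
  have deviation_eq: "deriv (deriv (Phi f \<theta> \<epsilon> \<xi> \<xi>s N h)) (\<theta> + d)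
        + (\<Sum>k\<in>{1..N}. (2*pi*real k)^2 * h k * (fcoef f k)^2)
      = (\<Sum>k\<in>{1..N}. h k * (2*pi*real k)^2 * ((fcoef f k)^2
          + (\<epsilon> * y k * cos (2*pi*real k*d) - (fcoef f k + \<epsilon> * x k) * sin (2*pi*real k*d))^2
          - ((fcoef f k + \<epsilon> * x k) * cos (2*pi*real k*d) + \<epsilon> * y k * sin (2*pi*real k*d))^2))"
    unfolding deriv2_Phi_rotated sum.distrib[symmetric] x_def y_def
    by (rule sum.cong[OF refl], rule regroup)
  show ?thesis
    unfolding deviation_eq
  proof (rule order_trans[OF sum_abs sum_mono])
    fix k assume k: "k \<in> {1..N}"
    have "\<bar>(fcoef f k)^2
          + (\<epsilon> * y k * cos (2*pi*real k*d) - (fcoef f k + \<epsilon> * x k) * sin (2*pi*real k*d))^2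
          - ((fcoef f k + \<epsilon> * x k) * cos (2*pi*real k*d) + \<epsilon> * y k * sin (2*pi*real k*d))^2\<bar>
        \<le> 2 * (fcoef f k)^2 * (sin (2*pi*real k*d))^2 + 2 * \<epsilon> * \<bar>fcoef f k\<bar> * X k + \<epsilon>^2 * (X k)^2"
      (is "\<bar>?E\<bar> \<le> ?B")
      using rotated_square_difference_bound[OF sin_cos_squared_add2 \<epsilon>] unfolding X_def x_def y_def by simp
    moreover have "0 \<le> h k" "h k \<le> 1"
      using h01[OF k] by auto
    ultimately show "\<bar>h k * (2*pi*real k)^2 * ?E\<bar> \<le> (2*pi*real k)^2 * ?B"
      by (auto simp: abs_mult intro!: mult_mono mult_left_le_one_le)
  qed
qed

lemma deriv2_Phi_deviation_le:
  assumes N: "1 \<le> N" and near: "4*pi*\<bar>\<tau> - \<theta>\<bar> \<le> 1 / real N"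
    and level: "\<epsilon>^2 * L \<le> real N powr (-(2*\<beta> + 1))" and L: "0 < L" and \<epsilon>: "0 \<le> \<epsilon>"
    and b: "1 \<le> b" "b \<le> 3/2" "b \<le> \<beta>"
    and f_smooth: "sob_finite \<beta> f"
    and h01: "\<And>k. k \<in> {1..N} \<Longrightarrow> 0 \<le> h k \<and> h k \<le> 1"
  shows "\<bar>deriv (deriv (Phi f \<theta> \<epsilon> \<xi> \<xi>s N h)) \<tau> + (\<Sum>k\<in>{1..N}. (2*pi*real k)^2 * h k * (fcoef f k)^2)\<bar>
    \<le> real N powr (2 - 2*b) * (sob_norm \<beta> f
        + 2*pi * (MAX k\<in>{1..N}. sqrt ((xi_rot \<xi> \<xi>s \<theta> k)^2 + (xi_rot_star \<xi> \<xi>s \<theta> k)^2)) / sqrt L)^2"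
proof -
  define X where "X k = sqrt ((xi_rot \<xi> \<xi>s \<theta> k)^2 + (xi_rot_star \<xi> \<xi>s \<theta> k)^2)" for k
  have "\<bar>deriv (deriv (Phi f \<theta> \<epsilon> \<xi> \<xi>s N h)) \<tau> + (\<Sum>k\<in>{1..N}. (2*pi*real k)^2 * h k * (fcoef f k)^2)\<bar>
      \<le> (\<Sum>k\<in>{1..N}. (2*pi*real k)^2 * (2 * (fcoef f k)^2 * (sin (2*pi*real k*(\<tau> - \<theta>)))^2
        + 2 * \<epsilon> * \<bar>fcoef f k\<bar> * X k + \<epsilon>^2 * (X k)^2))"
    using abs_deriv2_Phi_deviation_le_sum[OF \<epsilon> h01, where \<theta> = \<theta> and d = "\<tau> - \<theta>"] unfolding X_def by simp
  also have "\<dots> \<le> real N powr (2 - 2*b) * (sob_norm \<beta> f + 2*pi * (MAX k\<in>{1..N}. X k) / sqrt L)^2"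
  proof (rule curvature_error_sum_le[OF N near level L \<epsilon> b])
    show "(\<Sum>k\<in>{1..N}. (2*pi*real k) powr (2*\<beta>) * (fcoef f k)^2) \<le> (sob_norm \<beta> f)^2"
      using f_smooth by (rule sum_le_sob_norm_square)
    show "0 \<le> sob_norm \<beta> f"
      using f_smooth by (rule sob_norm_nonneg)
    show "0 \<le> X k \<and> X k \<le> (MAX k\<in>{1..N}. X k)" if "k \<in> {1..N}" for k
      using that unfolding X_def by (auto intro: Max_ge)
  qed
  finally show ?thesis
    unfolding X_def .
qed

theorem lemma1:
  fixes f :: "real \<Rightarrow> real" and \<theta> \<beta> \<epsilon> :: real
    and \<xi> \<xi>s :: "nat \<Rightarrow> real" and h :: "nat \<Rightarrow> real"
  assumes f_meas: "f \<in> borel_measurable lborel"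
    and f_L2: "set_integrable lborel {-(1/2)..1/2} (\<lambda>t. (f t)^2)"
    and f_even: "\<And>t. f (-t) = f t"
    and f_per: "\<And>t. f (t + 1) = f t"
    and \<beta>: "\<beta> > 1"
    and f_smooth: "sob_finite \<beta> f"
    and \<epsilon>: "0 < \<epsilon>" "\<epsilon> < 1"
    and N: "N_eps \<beta> \<epsilon> \<ge> 1"
    and h01: "\<And>k. k \<in> {1..N_eps \<beta> \<epsilon>} \<Longrightarrow> 0 \<le> h k \<and> h k \<le> 1"
    and h0: "\<And>k. k \<notin> {1..N_eps \<beta> \<epsilon>} \<Longrightarrow> h k = 0"
  shows "\<forall>\<tau>. 4*pi*\<bar>\<tau> - \<theta>\<bar> \<le> 1 / real (N_eps \<beta> \<epsilon>) \<longrightarrow>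
     \<bar>deriv (deriv (Phi f \<theta> \<epsilon> \<xi> \<xi>s (N_eps \<beta> \<epsilon>) h)) \<tau>
        + (\<Sum>k\<in>{1..N_eps \<beta> \<epsilon>}. (2*pi*real k)^2 * h k * (fcoef f k)^2)\<bar>
     \<le> real (N_eps \<beta> \<epsilon>) powr (2 - 2 * min \<beta> 1.5) *
        (sob_norm \<beta> f + 2*pi*(MAX k\<in>{1..N_eps \<beta> \<epsilon>}.
            sqrt ((xi_rot \<xi> \<xi>s \<theta> k)^2 + (xi_rot_star \<xi> \<xi>s \<theta> k)^2))
          / sqrt (ln (1 / \<epsilon>^5)))^2"
proof -
  \<comment> \<open>Only the coefficients of f enter, so the regularity, symmetry and periodicity of f
    and the vanishing of h outside {1..N} are not needed.\<close>
  have L: "0 < ln (1 / \<epsilon>^5)"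
    using \<epsilon> by (simp add: power_less_one_iff)
  have level: "\<epsilon>^2 * ln (1 / \<epsilon>^5) \<le> real (N_eps \<beta> \<epsilon>) powr (-(2*\<beta> + 1))"
    using \<beta> by (intro N_eps_noise_level \<epsilon> N) auto
  have b: "1 \<le> min \<beta> 1.5" "min \<beta> 1.5 \<le> 3/2" "min \<beta> 1.5 \<le> \<beta>"
    using \<beta> by auto
  show ?thesis
    using deriv2_Phi_deviation_le[where h = h, OF N _ level L _ b f_smooth h01] \<epsilon> by auto
qed

end
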